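(* Let $A\in\mathbb{R}^{nm\times nm}$, $x=\operatorname{vec}(X)\in S^{nm-1}\cap\mathcal{M}_r$, $\mathfrak{R}(x)=x^\top Ax$ and $P=\mathrm{P}_{T_X\mathcal{M}_r}$. Suppose $\xi\in\mathbb{R}^{nm}$ satisfies $P\xi=\xi$, $x^\top\xi=0$ and \[ (I-xx^\top)\,P\,(A-\mathfrak{R}(x)I)\,P\,(I-xx^\top)\,\xi=-P(I-xx^\top)Ax. \] Then $\tilde x=x+\xi$ satisfies $P\tilde x=\tilde x$ and \[ P\,(A-\mathfrak{R}(x)I)\,P\,\tilde x=\alpha\, x,\qquad \alpha=x^\top P(A-\mathfrak{R}(x)I)P\xi . \] In particular, if $\alpha\neq0$, then $\tilde x/\alpha$ solves the low-rank Rayleigh quotient iteration system $P(A-\mathfrak{R}(x)I)P\,y=x$, $Py=y$, and $R(\tilde x/\alpha)=R(\tilde x)$ for the normalized retraction $R$ (whenever it is scale invariant, e.g. $R(y)=\mathrm{P}_{\mathcal{M}_r}(y)/\|\mathrm{P}_{\mathcal{M}_r}(y)\|$ with $\alpha>0$).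
   Context: $\operatorname{vec}$ is columnwise reshaping, $S^{nm-1}$ the unit sphere of $\mathbb{R}^{nm}$, $\mathcal{M}_r$ the manifold of (vectorized) $n\times m$ matrices of rank exactly $r$. With thin SVD $X=USV^\top$ ($U^\top U=I_r$, $V^\top V=I_r$), $\mathrm{P}_{T_X\mathcal{M}_r}=VV^\top\otimes UU^\top+VV^\top\otimes(I_n-UU^\top)+(I_m-VV^\top)\otimes UU^\top$ is the orthogonal projection onto the tangent space of $\mathcal{M}_r$ at $X$; note $Px=x$. $\mathrm{P}_{\mathcal{M}_r}(y)$ denotes a best approximation of $y$ in $\mathcal{M}_r$ in the Euclidean norm. *)

theory Defs
  imports "HOL-Analysis.Analysis"
begin

text \<open>Vectors of R^(nm) are indexed by pairs (i,j) :: 'n \<times> 'm; the entry at (i,j)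
  is X_ij. This index set is in bijection with {1..nm} via column-major order
  (i,j) \<mapsto> (j-1)n + i, so vecm is the columnwise reshaping.\<close>

definition vecm :: "real^'m^'n \<Rightarrow> real^('n \<times> 'm)" where
  "vecm X = (\<chi> p. X $ fst p $ snd p)"

text \<open>Kronecker product B \<otimes> C for B :: m\<times>m, C :: n\<times>n, with rows/columns indexed
  consistently with vecm (column-major): entry ((i,j),(k,l)) is B_jl * C_ik.\<close>

definition kron :: "real^'m^'m \<Rightarrow> real^'n^'n \<Rightarrow> real^('n \<times> 'm)^('n \<times> 'm)" where
  "kron B C = (\<chi> p q. B $ snd p $ snd q * C $ fst p $ fst q)"

definition outer :: "real^'k \<Rightarrow> real^'k \<Rightarrow> real^'k^'k" where
  "outer x y = (\<chi> i j. x $ i * y $ j)"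

text \<open>Orthogonal projection onto the tangent space of M_r at X = U S V^T.\<close>

definition tanproj :: "real^'r^'n \<Rightarrow> real^'r^'m \<Rightarrow> real^('n \<times> 'm)^('n \<times> 'm)" where
  "tanproj U V =
     kron (V ** transpose V) (U ** transpose U)
   + kron (V ** transpose V) (mat 1 - U ** transpose U)
   + kron (mat 1 - V ** transpose V) (U ** transpose U)"

definition rayleigh :: "real^'k^'k \<Rightarrow> real^'k \<Rightarrow> real" where
  "rayleigh A x = x \<bullet> (A *v x)"

end

theory Submission
  imports Defs
begin

text \<open>The tangent projector fixes \<open>x\<close>: by the vec trick its three Kronecker terms act on
  \<open>X\<close> as \<open>UU\<^sup>T X VV\<^sup>T\<close>, \<open>(I - UU\<^sup>T) X VV\<^sup>T\<close> and \<open>UU\<^sup>T X (I - VV\<^sup>T)\<close>, and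
  \<open>UU\<^sup>T X = X = X VV\<^sup>T\<close> for \<open>X = USV\<^sup>T\<close>. Put \<open>M = P (A - \<rho>I) P\<close>, \<open>Q = I - xx\<^sup>T\<close> and
  \<open>\<alpha> = x\<^sup>T M \<xi>\<close>. Since \<open>Q\<xi> = \<xi>\<close>, the left side of the correction equation is \<open>M\<xi> - \<alpha>x\<close>,
  while, because \<open>\<rho> = x\<^sup>TAx\<close> and \<open>Px = x\<close>, its right side is \<open>-(PAx - \<rho>x) = -Mx\<close>.
  Hence \<open>M(x + \<xi>) = \<alpha>x\<close>; the remaining claims follow by linearity.\<close>

lemma matrix_diff_rdistrib: "(A - B) ** (C :: real^'a^'b) = A ** C - B ** C"
  by (simp add: vec_eq_iff matrix_matrix_mult_def sum_subtractf algebra_simps)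

lemma matrix_diff_ldistrib: "(C :: real^'b^'c) ** (A - B) = C ** A - C ** B"
  by (simp add: vec_eq_iff matrix_matrix_mult_def sum_subtractf algebra_simps)

lemma transpose_diff: "transpose (A - B :: real^'a^'b) = transpose A - transpose B"
  by (simp add: vec_eq_iff transpose_def)

lemma vecm_0 [simp]: "vecm 0 = 0"
  by (simp add: vec_eq_iff vecm_def)

lemma kron_mult_vecm: "kron B C *v vecm X = vecm (C ** X ** transpose B)"
proof -
  have "(kron B C *v vecm X) $ (i, j) = vecm (C ** X ** transpose B) $ (i, j)" for i j
  proof -
    have "(kron B C *v vecm X) $ (i, j)
        = (\<Sum>q\<in>UNIV \<times> UNIV. B $ j $ snd q * C $ i $ fst q * X $ fst q $ snd q)"
      by (simp add: kron_def vecm_def matrix_vector_mult_def)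
    also have "\<dots> = (\<Sum>k\<in>UNIV. \<Sum>l\<in>UNIV. B $ j $ l * C $ i $ k * X $ k $ l)"
      by (simp add: sum.cartesian_product case_prod_beta')
    also have "\<dots> = (\<Sum>l\<in>UNIV. (\<Sum>k\<in>UNIV. C $ i $ k * X $ k $ l) * B $ j $ l)"
      by (subst sum.swap) (simp add: sum_distrib_left sum_distrib_right mult_ac)
    also have "\<dots> = vecm (C ** X ** transpose B) $ (i, j)"
      by (simp add: vecm_def matrix_matrix_mult_def transpose_def)
    finally show ?thesis .
  qed
  then show ?thesis
    by (simp add: vec_eq_iff)
qed

lemma outer_mult_vec: "outer x y *v v = (y \<bullet> v) *\<^sub>R x"
  by (simp add: vec_eq_iff outer_def matrix_vector_mult_def inner_vec_def sum_distrib_left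
      sum_distrib_right mult_ac)

lemma tanproj_vecm_svd:
  fixes U :: "real^'r^'n" and V :: "real^'r^'m" and S :: "real^'r^'r"
  assumes svd: "X = U ** S ** transpose V"
    and U_orth: "transpose U ** U = mat 1"
    and V_orth: "transpose V ** V = mat 1"
  shows "tanproj U V *v vecm X = vecm X"
proof -
  have sym_VV: "transpose (V ** transpose V) = V ** transpose V"
    by (simp add: matrix_transpose_mul)
  have UU_X: "(U ** transpose U) ** X = X"
  proof -
    have "(U ** transpose U) ** X = U ** (transpose U ** U) ** S ** transpose V"
      by (simp add: svd matrix_mul_assoc)
    then show ?thesis
      using U_orth svd by (simp add: matrix_mul_lid)
  qed
  have X_VV: "X ** (V ** transpose V) = X"
  proof -
    have "X ** (V ** transpose V) = U ** S ** (transpose V ** V) ** transpose V"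
      by (simp add: svd matrix_mul_assoc)
    then show ?thesis
      using V_orth svd by (simp add: matrix_mul_rid)
  qed
  have "kron (V ** transpose V) (U ** transpose U) *v vecm X = vecm X"
    and "kron (V ** transpose V) (mat 1 - U ** transpose U) *v vecm X = 0"
    and "kron (mat 1 - V ** transpose V) (U ** transpose U) *v vecm X = 0"
    by (simp_all add: kron_mult_vecm sym_VV UU_X X_VV matrix_diff_rdistrib matrix_diff_ldistrib
        transpose_diff matrix_mul_lid matrix_mul_rid)
  then show ?thesis
    by (simp add: tanproj_def matrix_vector_mult_add_rdistrib)
qed

lemma rayleigh_correction_eigen:
  fixes A P :: "real^'k^'k" and x \<xi> :: "real^'k"
  defines "\<rho> \<equiv> rayleigh A x"
  defines "M \<equiv> P ** (A - \<rho> *\<^sub>R mat 1) ** P"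
  assumes Px: "P *v x = x"
    and orth: "x \<bullet> \<xi> = 0"
    and eq: "((mat 1 - outer x x) ** P ** (A - \<rho> *\<^sub>R mat 1) ** P ** (mat 1 - outer x x)) *v \<xi>
             = - ((P ** (mat 1 - outer x x)) *v (A *v x))"
  shows "M *v (x + \<xi>) = (x \<bullet> (M *v \<xi>)) *\<^sub>R x"
proof -
  define Q :: "real^'k^'k" where "Q = mat 1 - outer x x"
  define \<alpha> where "\<alpha> = x \<bullet> (M *v \<xi>)"
  have Q_mult: "Q *v v = v - (x \<bullet> v) *\<^sub>R x" for v
    by (simp add: Q_def matrix_vector_mult_diff_rdistrib outer_mult_vec)
  have P_shift: "P *v (A *v x - \<rho> *\<^sub>R x) = P *v (A *v x) - \<rho> *\<^sub>R x"
    by (simp add: matrix_vector_mult_diff_distrib matrix_vector_mult_scaleR Px)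
  have Mx: "M *v x = P *v (A *v x) - \<rho> *\<^sub>R x"
    by (simp add: M_def matrix_vector_mul_assoc[symmetric] Px matrix_vector_mult_diff_rdistrib
        scaleR_matrix_vector_assoc[symmetric] P_shift)
  have "(Q ** M ** Q) *v \<xi> = M *v \<xi> - \<alpha> *\<^sub>R x"
    by (simp add: matrix_vector_mul_assoc[symmetric] Q_mult orth \<alpha>_def)
  moreover have "(P ** Q) *v (A *v x) = P *v (A *v x) - \<rho> *\<^sub>R x"
    by (simp add: matrix_vector_mul_assoc[symmetric] Q_mult P_shift
        \<rho>_def[unfolded rayleigh_def, symmetric])
  moreover have "Q ** M ** Q = Q ** P ** (A - \<rho> *\<^sub>R mat 1) ** P ** Q"
    by (simp add: M_def matrix_mul_assoc)
  ultimately have "M *v \<xi> - \<alpha> *\<^sub>R x = - (M *v x)"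
    using eq by (simp add: Q_def[symmetric] Mx)
  then show ?thesis
    by (simp add: matrix_vector_right_distrib \<alpha>_def algebra_simps)
qed

theorem mainTheorem5:
  fixes A :: "real^('n::finite \<times> 'm::finite)^('n \<times> 'm)"
    and X :: "real^'m^'n"
    and U :: "real^('r::finite)^'n" and S :: "real^'r^'r" and V :: "real^'r^'m"
    and \<xi> :: "real^('n \<times> 'm)"
  defines "x \<equiv> vecm X"
    and "P \<equiv> tanproj U V"
    and "\<rho> \<equiv> rayleigh A (vecm X)"
  assumes rank: "rank X = CARD('r)"
    and svd: "X = U ** S ** transpose V"
    and U_orth: "transpose U ** U = mat 1"
    and V_orth: "transpose V ** V = mat 1"
    and S_diag: "\<forall>i j. i \<noteq> j \<longrightarrow> S $ i $ j = 0"
    and S_pos: "\<forall>i. S $ i $ i > 0"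
    and unit: "norm x = 1"
    and tang: "P *v \<xi> = \<xi>"
    and orth: "x \<bullet> \<xi> = 0"
    and eq: "((mat 1 - outer x x) ** P ** (A - \<rho> *\<^sub>R mat 1) ** P ** (mat 1 - outer x x)) *v \<xi>
             = - ((P ** (mat 1 - outer x x)) *v (A *v x))"
  shows "let xt = x + \<xi>;
             \<alpha> = x \<bullet> ((P ** (A - \<rho> *\<^sub>R mat 1) ** P) *v \<xi>)
         in P *v xt = xt
          \<and> (P ** (A - \<rho> *\<^sub>R mat 1) ** P) *v xt = \<alpha> *\<^sub>R x
          \<and> (\<alpha> \<noteq> 0 \<longrightarrow>
               (P ** (A - \<rho> *\<^sub>R mat 1) ** P) *v ((1 / \<alpha>) *\<^sub>R xt) = x
             \<and> P *v ((1 / \<alpha>) *\<^sub>R xt) = (1 / \<alpha>) *\<^sub>R xt)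
          \<and> (\<forall>R :: real^('n \<times> 'm) \<Rightarrow> real^('n \<times> 'm).
               (\<forall>c y. c \<noteq> 0 \<longrightarrow> R (c *\<^sub>R y) = R y) \<longrightarrow> \<alpha> \<noteq> 0
                 \<longrightarrow> R ((1 / \<alpha>) *\<^sub>R xt) = R xt)
          \<and> (\<forall>R :: real^('n \<times> 'm) \<Rightarrow> real^('n \<times> 'm).
               (\<forall>c y. c > 0 \<longrightarrow> R (c *\<^sub>R y) = R y) \<longrightarrow> \<alpha> > 0
                 \<longrightarrow> R ((1 / \<alpha>) *\<^sub>R xt) = R xt)"
proof -
  have Px: "P *v x = x"
    unfolding P_def x_def using tanproj_vecm_svd[OF svd U_orth V_orth] .
  have "P *v (x + \<xi>) = x + \<xi>"
    by (simp add: matrix_vector_right_distrib Px tang)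
  moreover have "(P ** (A - \<rho> *\<^sub>R mat 1) ** P) *v (x + \<xi>)
      = (x \<bullet> ((P ** (A - \<rho> *\<^sub>R mat 1) ** P) *v \<xi>)) *\<^sub>R x"
    using rayleigh_correction_eigen[OF Px orth] eq by (simp add: \<rho>_def x_def)
  ultimately show ?thesis
    unfolding Let_def by (auto simp: matrix_vector_mult_scaleR)
qed

end
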